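(* Assume the standing hypotheses and fix a constant $C_1>0$. Then there exist $\rho>0$, $\bar\mu\in(0,\hat\mu]$ and constants $0<c\le C$ (independent of $\mu$ and $(x,\lambda)$) such that for every $\mu\in(0,\bar\mu]$ and every $(x,\lambda)\in\mathcal B((x^*,\lambda^* ),\delta)$ with $x>0$, $\lambda>0$, $\|(x,\lambda)-(x^\mu,\lambda^\mu)\|<\rho$ and $\|F_\mu(x,\lambda)\|\le C_1\mu$, one has $$x_i\le C\mu \ \ (i\in\mathcal A),\qquad c\le x_i\le C\ \ (i\in\mathcal I),\qquad c\le \lambda_i\le C\ \ (i\in\mathcal A),\qquad \lambda_i\le C\mu\ \ (i\in\mathcal I).$$ That is, $x_i=\mathcal O(\mu)$, $\lambda_i=\Theta(1)$ for $i\in\mathcal A$ and $x_i=\Theta(1)$, $\lambda_i=\mathcal O(\mu)$ for $i\in\mathcal I$.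
   Context: Problem: minimize $f(x)$ subject to $x\ge 0$, where $f:\mathbb R^n\to\mathbb R$ is twice continuously differentiable with locally Lipschitz continuous Hessian. All norms are Euclidean; $e$ is the all-ones vector; for vectors $x,\lambda$, $X=\mathrm{diag}(x)$, $\Lambda=\mathrm{diag}(\lambda)$. For $\mu\in\mathbb R$ define $F_\mu:\mathbb R^{2n}\to\mathbb R^{2n}$ by $F_\mu(x,\lambda)=\begin{bmatrix}\nabla f(x)-\lambda\\ \Lambda X e-\mu e\end{bmatrix}$, with Jacobian (independent of $\mu$) $F'(x,\lambda)=\begin{bmatrix}H&-I\\ \Lambda&X\end{bmatrix}$, $H=\nabla^2 f(x)$. Standing hypotheses: $(x^*,\lambda^* )$ satisfies $\nabla f(x^* )=\lambda^*$, $x^*\ge0$, $\lambda^*\ge0$, $x^*_i\lambda^*_i=0$ for all $i$, $x^*+\lambda^*>0$ (strict complementarity), and the second-order condition $[\nabla^2 f(x^* )]_{\mathcal I\mathcal I}\succ 0$. Here $\mathcal A=\{i:x^*_i=0\}$ (active set) and $\mathcal I=\{i:x^*_i>0\}$ (inactive set); for a matrix/vector, subscripts $\mathcal A,\mathcal I$ denote the corresponding row/column sub-blocks. Further, $\delta>0$ is such that $F'$ is nonsingular on $\mathcal B((x^*,\lambda^* ),\delta)=\{(x,\lambda):\|(x,\lambda)-(x^*,\lambda^* )\|<\delta\}$ with $\|F'(x,\lambda)^{-1}\|\le M$ there, and $\hat\mu>0$ is such that for $\mu\in(0,\hat\mu]$ there is a Lipschitz continuous map $\mu\mapsto(x^\mu,\lambda^\mu)\in\mathcal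 B((x^*,\lambda^* ),\delta)$ (the barrier trajectory) with $F_\mu(x^\mu,\lambda^\mu)=0$ and $\|(x^\mu,\lambda^\mu)-(x^*,\lambda^* )\|\le C_4\mu$ for a constant $C_4$. *)

theory Defs
  imports "HOL-Analysis.Analysis"
begin

text \<open>Points (x, lambda) of R^(2n) are pairs in (real^'n) \<times> (real^'n); the product norm
  in Isabelle is Euclidean: norm (a,b) = sqrt (norm a ^ 2 + norm b ^ 2).\<close>

definition Fmu :: "(real^'n \<Rightarrow> real^'n) \<Rightarrow> real \<Rightarrow> (real^'n) \<times> (real^'n) \<Rightarrow> (real^'n) \<times> (real^'n)" where
  "Fmu g mu p = (g (fst p) - snd p, (\<chi> i. (snd p $ i) * (fst p $ i) - mu))"

text \<open>The Jacobian F'(x,lambda) = [[H, -I],[Lambda, X]] as a linear map on pairs,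
  with H the Hessian of f.\<close>
definition Fjac :: "(real^'n \<Rightarrow> real^'n^'n) \<Rightarrow> (real^'n) \<times> (real^'n) \<Rightarrow> (real^'n) \<times> (real^'n) \<Rightarrow> (real^'n) \<times> (real^'n)" where
  "Fjac H p d = (H (fst p) *v fst d - snd d,
                 (\<chi> i. (snd p $ i) * (fst d $ i) + (fst p $ i) * (snd d $ i)))"

end

theory Submission
  imports Defs
begin

text \<open>Strict complementarity gives a uniform margin \<open>m\<close> with \<open>xs\<^sub>i + ls\<^sub>i \<ge> m\<close>.
  Every point within \<open>m/2\<close> of \<open>(xs, ls)\<close> therefore keeps the nonzero member of each pair
  \<open>(xs\<^sub>i, ls\<^sub>i)\<close> above \<open>m/2\<close> and both members bounded. A small residual forces
  \<open>l\<^sub>i x\<^sub>i = O(\<mu>)\<close>, so the other member is \<open>O(\<mu>)\<close>. Since the barrier trajectory is within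
  \<open>C4 \<mu>\<close> of \<open>(xs, ls)\<close>, taking \<open>\<rho> = m/4\<close> and \<open>\<mu>\<close> small puts every admissible point within
  \<open>m/2\<close> of \<open>(xs, ls)\<close>.\<close>

lemma strict_complementarity_margin:
  fixes xs ls :: "real^'n"
  assumes "\<And>i. xs $ i + ls $ i > 0"
  obtains m where "m > 0" "\<And>i. m \<le> xs $ i + ls $ i"
proof
  show "Min (range (\<lambda>i. xs $ i + ls $ i)) > 0"
    using assms by simp
  show "Min (range (\<lambda>i. xs $ i + ls $ i)) \<le> xs $ i + ls $ i" for i
    by (intro Min_le) auto
qed

lemma component_le_norm_pair:
  fixes p :: "(real^'n) \<times> (real^'n)"
  shows "\<bar>fst p $ i\<bar> \<le> norm p" and "\<bar>snd p $ i\<bar> \<le> norm p"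
  using component_le_norm_cart[of "fst p" i] component_le_norm_cart[of "snd p" i]
    norm_fst_le[of "fst p" "snd p"] norm_snd_le[of "snd p" "fst p"]
  by simp_all

lemma complementarity_product_le_residual:
  "l $ i * x $ i \<le> mu + norm (Fmu g mu (x, l))"
proof -
  have "\<bar>l $ i * x $ i - mu\<bar> \<le> norm (Fmu g mu (x, l))"
    using component_le_norm_pair(2)[of "Fmu g mu (x, l)" i] by (simp add: Fmu_def)
  then show ?thesis by linarith
qed

lemma linearly_convergent_path_within:
  fixes p :: "real \<Rightarrow> 'a::real_normed_vector"
  assumes close: "\<And>mu. mu \<in> {0<..muhat} \<Longrightarrow> norm (p mu - p0) \<le> K * mu"
    and muhat_pos: "0 < muhat" and r_pos: "0 < r"
  obtains mubar where "0 < mubar" "mubar \<le> muhat"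
    "\<And>mu. 0 < mu \<Longrightarrow> mu \<le> mubar \<Longrightarrow> norm (p mu - p0) \<le> r"
proof
  have "norm (p muhat - p0) \<le> K * muhat" using close muhat_pos by simp
  then have "0 \<le> K * muhat" using norm_ge_zero order_trans by blast
  then have K_nn: "0 \<le> K" using muhat_pos by (simp add: zero_le_mult_iff)
  show "0 < min muhat (r / (K + 1))" "min muhat (r / (K + 1)) \<le> muhat"
    using muhat_pos r_pos K_nn by simp_all
  show "norm (p mu - p0) \<le> r" if "0 < mu" "mu \<le> min muhat (r / (K + 1))" for mu
  proof -
    have "K * mu \<le> K * (r / (K + 1))"
      using that K_nn by (intro mult_left_mono) auto
    also have "\<dots> \<le> r" using K_nn r_pos by (simp add: field_simps)
    finally show ?thesis using close[of mu] that by force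
  qed
qed

lemma strictly_complementary_neighbourhood_bounds:
  fixes x l xs ls :: "real^'n"
  assumes margin: "\<And>i. m \<le> xs $ i + ls $ i" and m_pos: "m > 0"
    and compl: "\<And>i. xs $ i * ls $ i = 0"
    and x_pos: "\<And>i. x $ i > 0" and l_pos: "\<And>i. l $ i > 0"
    and close: "norm ((x, l) - (xs, ls)) < m / 2"
    and mu_pos: "0 < mu"
    and residual: "norm (Fmu g mu (x, l)) \<le> C1 * mu"
  defines "C \<equiv> max (norm xs + norm ls + m) (2 * (1 + C1) / m)"
  shows "(\<forall>i. xs $ i = 0 \<longrightarrow> x $ i \<le> C * mu \<and> m / 2 \<le> l $ i \<and> l $ i \<le> C) \<and>
         (\<forall>i. xs $ i > 0 \<longrightarrow> m / 2 \<le> x $ i \<and> x $ i \<le> C \<and> l $ i \<le> C * mu)"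
proof -
  have dx: "\<bar>x $ i - xs $ i\<bar> < m / 2" for i
    using order_le_less_trans[OF component_le_norm_pair(1) close] by simp
  have dl: "\<bar>l $ i - ls $ i\<bar> < m / 2" for i
    using order_le_less_trans[OF component_le_norm_pair(2) close] by simp
  have upper: "x $ i \<le> C" "l $ i \<le> C" for i
  proof -
    have "xs $ i \<le> norm xs" "ls $ i \<le> norm ls"
      by (meson component_le_norm_cart abs_ge_self order_trans)+
    then have "x $ i \<le> norm xs + norm ls + m" "l $ i \<le> norm xs + norm ls + m"
      using dx[of i] dl[of i] norm_ge_zero[of xs] norm_ge_zero[of ls]
      unfolding abs_less_iff by linarith+
    then show "x $ i \<le> C" "l $ i \<le> C" unfolding C_def by auto
  qed
  have product: "l $ i * x $ i \<le> (1 + C1) * mu" for i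
    using complementarity_product_le_residual[of l i x mu g] residual by (simp add: algebra_simps)
  have small: "b \<le> C * mu" if "m / 2 \<le> a" "0 < b" "a * b \<le> (1 + C1) * mu" for a b :: real
  proof -
    have "m / 2 * b \<le> (1 + C1) * mu"
      using that mult_right_mono[of "m / 2" a b] by linarith
    then have "b \<le> 2 * (1 + C1) / m * mu"
      using m_pos by (simp add: field_simps)
    also have "\<dots> \<le> C * mu"
      unfolding C_def using mu_pos by (intro mult_right_mono) auto
    finally show ?thesis .
  qed
  have active: "m / 2 \<le> l $ i" if "xs $ i = 0" for i
    using dl[of i] margin[of i] that unfolding abs_less_iff by simp
  have inactive: "m / 2 \<le> x $ i" if "xs $ i > 0" for i
  proof -
    have "ls $ i = 0" using compl[of i] that by simp
    then show ?thesis using dx[of i] margin[of i] unfolding abs_less_iff by simp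
  qed
  show ?thesis
  proof (intro conjI allI impI)
    fix i
    show "x $ i \<le> C * mu" if "xs $ i = 0"
      using small[OF active[OF that] x_pos product] .
    show "l $ i \<le> C * mu" if "xs $ i > 0"
      using small[OF inactive[OF that] l_pos] product[of i] by (simp add: mult.commute)
  qed (use upper active inactive in auto)
qed

theorem lemma4:
  fixes f :: "real^'n \<Rightarrow> real"
    and g :: "real^'n \<Rightarrow> real^'n"
    and H :: "real^'n \<Rightarrow> real^'n^'n"
    and xs ls :: "real^'n"
    and xmu lmu :: "real \<Rightarrow> real^'n"
    and \<delta> M muhat C4 C1 :: real
  assumes grad: "\<And>x. (f has_derivative (\<lambda>h. g x \<bullet> h)) (at x)"
    and hess: "\<And>x. (g has_derivative (\<lambda>h. H x *v h)) (at x)"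
    and hess_cont: "continuous_on UNIV H"
    and hess_lip: "\<And>x. \<exists>r>0. \<exists>L. \<forall>y\<in>ball x r. \<forall>z\<in>ball x r. norm (H y - H z) \<le> L * dist y z"
    and kkt_grad: "g xs = ls"
    and xs_nn: "\<And>i. xs $ i \<ge> 0"
    and ls_nn: "\<And>i. ls $ i \<ge> 0"
    and compl: "\<And>i. xs $ i * ls $ i = 0"
    and strict: "\<And>i. xs $ i + ls $ i > 0"
    and sosc: "\<And>v. v \<noteq> 0 \<Longrightarrow> (\<forall>i. xs $ i = 0 \<longrightarrow> v $ i = 0) \<Longrightarrow> v \<bullet> (H xs *v v) > 0"
    and \<delta>_pos: "\<delta> > 0"
    and nonsing: "\<And>p. p \<in> ball (xs, ls) \<delta> \<Longrightarrow>
                    bij (Fjac H p) \<and> onorm (inv (Fjac H p)) \<le> M"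
    and muhat_pos: "muhat > 0"
    and traj_lip: "\<exists>L. \<forall>m1\<in>{0<..muhat}. \<forall>m2\<in>{0<..muhat}.
                    dist (xmu m1, lmu m1) (xmu m2, lmu m2) \<le> L * \<bar>m1 - m2\<bar>"
    and traj_ball: "\<And>mu. mu \<in> {0<..muhat} \<Longrightarrow> (xmu mu, lmu mu) \<in> ball (xs, ls) \<delta>"
    and traj_eq: "\<And>mu. mu \<in> {0<..muhat} \<Longrightarrow> Fmu g mu (xmu mu, lmu mu) = 0"
    and traj_close: "\<And>mu. mu \<in> {0<..muhat} \<Longrightarrow> norm ((xmu mu, lmu mu) - (xs, ls)) \<le> C4 * mu"
    and C1_pos: "C1 > 0"
  shows "\<exists>\<rho>>0. \<exists>mubar. 0 < mubar \<and> mubar \<le> muhat \<and> (\<exists>c C. 0 < c \<and> c \<le> C \<and>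
           (\<forall>mu x l. 0 < mu \<and> mu \<le> mubar \<and> (x, l) \<in> ball (xs, ls) \<delta> \<and>
              (\<forall>i. x $ i > 0) \<and> (\<forall>i. l $ i > 0) \<and>
              norm ((x, l) - (xmu mu, lmu mu)) < \<rho> \<and> norm (Fmu g mu (x, l)) \<le> C1 * mu \<longrightarrow>
              (\<forall>i. xs $ i = 0 \<longrightarrow> x $ i \<le> C * mu \<and> c \<le> l $ i \<and> l $ i \<le> C) \<and>
              (\<forall>i. xs $ i > 0 \<longrightarrow> c \<le> x $ i \<and> x $ i \<le> C \<and> l $ i \<le> C * mu)))"
proof -
  obtain m where m_pos: "m > 0" and margin: "\<And>i. m \<le> xs $ i + ls $ i"
    using strict_complementarity_margin strict by blast
  obtain mubar where mubar_pos: "0 < mubar" and mubar_le: "mubar \<le> muhat"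
    and traj_near: "\<And>mu. 0 < mu \<Longrightarrow> mu \<le> mubar \<Longrightarrow> norm ((xmu mu, lmu mu) - (xs, ls)) \<le> m / 4"
    using linearly_convergent_path_within[of muhat "\<lambda>mu. (xmu mu, lmu mu)" "(xs, ls)" C4 "m / 4"]
      traj_close muhat_pos m_pos by auto
  define C where "C = max (norm xs + norm ls + m) (2 * (1 + C1) / m)"
  have bounds: "\<forall>mu x l. 0 < mu \<and> mu \<le> mubar \<and> (x, l) \<in> ball (xs, ls) \<delta> \<and>
      (\<forall>i. x $ i > 0) \<and> (\<forall>i. l $ i > 0) \<and>
      norm ((x, l) - (xmu mu, lmu mu)) < m / 4 \<and> norm (Fmu g mu (x, l)) \<le> C1 * mu \<longrightarrow>
      (\<forall>i. xs $ i = 0 \<longrightarrow> x $ i \<le> C * mu \<and> m / 2 \<le> l $ i \<and> l $ i \<le> C) \<and>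
      (\<forall>i. xs $ i > 0 \<longrightarrow> m / 2 \<le> x $ i \<and> x $ i \<le> C \<and> l $ i \<le> C * mu)"
  proof (intro allI impI, elim conjE)
    fix mu x l
    assume mu: "0 < mu" "mu \<le> mubar" and pos: "\<forall>i. x $ i > 0" "\<forall>i. l $ i > 0"
      and near: "norm ((x, l) - (xmu mu, lmu mu)) < m / 4"
      and residual: "norm (Fmu g mu (x, l)) \<le> C1 * mu"
    have close: "norm ((x, l) - (xs, ls)) < m / 2"
      using norm_triangle_lt[of "(x, l) - (xmu mu, lmu mu)" "(xmu mu, lmu mu) - (xs, ls)" "m / 2"]
        near traj_near[OF mu] by simp
    show "(\<forall>i. xs $ i = 0 \<longrightarrow> x $ i \<le> C * mu \<and> m / 2 \<le> l $ i \<and> l $ i \<le> C) \<and>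
      (\<forall>i. xs $ i > 0 \<longrightarrow> m / 2 \<le> x $ i \<and> x $ i \<le> C \<and> l $ i \<le> C * mu)"
      unfolding C_def
      by (rule strictly_complementary_neighbourhood_bounds[OF margin m_pos compl _ _ close mu(1) residual])
        (use pos in auto)
  qed
  have "m / 2 \<le> C" unfolding C_def using m_pos by (simp add: le_max_iff_disj)
  moreover have "0 < m / 4" "0 < m / 2" using m_pos by simp_all
  ultimately show ?thesis using bounds mubar_pos mubar_le by blast
qed

end
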